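(* Let $(V,d)$ be a $\gamma$-coherent geometry with $|V|=n$, with (H2) holding for constants $\phi>0$ and $0<\lambda<1$, let $E_0$ be a substrate for $(V,d)$, let $\theta>0$, and let $E_q$ be a random edge set sampled from a product measure $G(n,\mathbf{Q})$ that is $\theta$-uniformly rich for $(V,d)$. Then with high probability the graph $G(V,E_0\cup E_q)$ is $(\theta+1)$-reducible.
   Context: Geometry $(V,d)$: finite $V$, $d$ symmetric, nonnegative, $d(x,y)=0$ iff $x=y$. For $\gamma>1$, $K=\lceil\log_\gamma n\rceil$, $P_k(v)=\#\{u: d(v,u)\in(\gamma^{k-1},\gamma^k]\}$; for $v\ne t$, $k_{vt}$ is the integer with $d(v,t)\in(\gamma^{k_{vt}-1},\gamma^{k_{vt}}]$ and $D_\lambda(v,t)=\{u: d(v,u)\le\gamma^{k_{vt}},\ d(u,t)\le\lambda d(v,t)\}$. $(V,d)$ is $\gamma$-coherent if (H1) there are $A>1,\alpha>0$ with $\alpha\gamma^k\le P_k(v)\le A\gamma^k$ for all $v$, $k\in[K]$, and (H2) there are $\phi>0$, $0<\lambda<1$ with $|D_\lambda(v,t)|\ge\phi\gamma^{k_{vt}}$ for all $v\ne t$. Substrate: an edge set $E_0$ such that for every $s\ne t$ there is $v$ with $\{s,v\}\in E_0$ and $d(v,t)\le d(s,t)-1$; one such $v$ is fixed and called the local $t$-connection of $s$. The local $(s,t)$-path starts at $s$ and repeatedly moves to the local $t$-connection of the current vertex until reaching $t$. $G(n,\mathbf{Q})$ includes each pair $\{i,j\}$ independently with probability $Q_{ij}$.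 With $k_\theta=\frac{\theta\log\log n-\log\alpha}{\log\gamma}$, it is $\theta$-uniformly rich if there is a constant $M>0$ such that for every $k\ge k_\theta$ and every pair with $d(i,j)\in(\gamma^{k-1},\gamma^k]$, $Q_{ij}\ge\frac{1}{M\log^\theta(n)\gamma^k}$. Reducibility: a graph $G(V,E)$ is $p$-reducible if there is a constant $C>0$ such that for every pair $s\ne t$, among the first $C(\log|V|)^p$ vertices of the local $(s,t)$-path there is a vertex $u$ with an edge $\{u,v\}\in E$ such that $d(v,t)\le\lambda d(s,t)$ ($\lambda$ the constant from (H2)). "With high probability": probability $\to1$ as $n\to\infty$. *)

theory Defs
  imports "HOL-Probability.Probability"
begin

definition is_geometry :: "nat set \<Rightarrow> (nat \<Rightarrow> nat \<Rightarrow> real) \<Rightarrow> bool" where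
  "is_geometry V d \<longleftrightarrow> finite V \<and>
     (\<forall>u\<in>V. \<forall>v\<in>V. d u v = d v u \<and> 0 \<le> d u v \<and> (d u v = 0 \<longleftrightarrow> u = v))"

definition Pk :: "nat set \<Rightarrow> (nat \<Rightarrow> nat \<Rightarrow> real) \<Rightarrow> real \<Rightarrow> int \<Rightarrow> nat \<Rightarrow> nat" where
  "Pk V d \<gamma> k v = card {u\<in>V. \<gamma> powr (real_of_int k - 1) < d v u \<and> d v u \<le> \<gamma> powr (real_of_int k)}"

definition kvt :: "(nat \<Rightarrow> nat \<Rightarrow> real) \<Rightarrow> real \<Rightarrow> nat \<Rightarrow> nat \<Rightarrow> int" where
  "kvt d \<gamma> v t = (THE k::int. \<gamma> powr (real_of_int k - 1) < d v t \<and> d v t \<le> \<gamma> powr (real_of_int k))"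

definition Dlam :: "nat set \<Rightarrow> (nat \<Rightarrow> nat \<Rightarrow> real) \<Rightarrow> real \<Rightarrow> real \<Rightarrow> nat \<Rightarrow> nat \<Rightarrow> nat set" where
  "Dlam V d \<gamma> lam v t = {u\<in>V. d v u \<le> \<gamma> powr (real_of_int (kvt d \<gamma> v t)) \<and> d u t \<le> lam * d v t}"

definition H1 :: "nat set \<Rightarrow> (nat \<Rightarrow> nat \<Rightarrow> real) \<Rightarrow> real \<Rightarrow> real \<Rightarrow> real \<Rightarrow> bool" where
  "H1 V d \<gamma> A \<alpha> \<longleftrightarrow> A > 1 \<and> \<alpha> > 0 \<and>
     (\<forall>v\<in>V. \<forall>k::int. 1 \<le> k \<and> k \<le> \<lceil>log \<gamma> (real (card V))\<rceil> \<longrightarrow>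
        \<alpha> * \<gamma> powr (real_of_int k) \<le> real (Pk V d \<gamma> k v) \<and>
        real (Pk V d \<gamma> k v) \<le> A * \<gamma> powr (real_of_int k))"

definition H2 :: "nat set \<Rightarrow> (nat \<Rightarrow> nat \<Rightarrow> real) \<Rightarrow> real \<Rightarrow> real \<Rightarrow> real \<Rightarrow> bool" where
  "H2 V d \<gamma> \<phi> lam \<longleftrightarrow> \<phi> > 0 \<and> 0 < lam \<and> lam < 1 \<and>
     (\<forall>v\<in>V. \<forall>t\<in>V. v \<noteq> t \<longrightarrow>
        real (card (Dlam V d \<gamma> lam v t)) \<ge> \<phi> * \<gamma> powr (real_of_int (kvt d \<gamma> v t)))"

definition coherent :: "nat set \<Rightarrow> (nat \<Rightarrow> nat \<Rightarrow> real) \<Rightarrow> real \<Rightarrow> real \<Rightarrow> real \<Rightarrow> real \<Rightarrow> real \<Rightarrow> bool" where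
  "coherent V d \<gamma> A \<alpha> \<phi> lam \<longleftrightarrow> is_geometry V d \<and> \<gamma> > 1 \<and> H1 V d \<gamma> A \<alpha> \<and> H2 V d \<gamma> \<phi> lam"

text \<open>Substrate E0 with fixed local connection: conn t s is the local t-connection of s.\<close>
definition substrate :: "nat set \<Rightarrow> (nat \<Rightarrow> nat \<Rightarrow> real) \<Rightarrow> nat set set \<Rightarrow> (nat \<Rightarrow> nat \<Rightarrow> nat) \<Rightarrow> bool" where
  "substrate V d E0 conn \<longleftrightarrow>
     E0 \<subseteq> {{u, v} | u v. u \<in> V \<and> v \<in> V \<and> u \<noteq> v} \<and>
     (\<forall>s\<in>V. \<forall>t\<in>V. s \<noteq> t \<longrightarrow>
        conn t s \<in> V \<and> {s, conn t s} \<in> E0 \<and> d (conn t s) t \<le> d s t - 1)"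

text \<open>Vertices of the local (s,t)-path with index < L (index 0 is s; the path stops at t).\<close>
definition path_prefix :: "(nat \<Rightarrow> nat \<Rightarrow> nat) \<Rightarrow> nat \<Rightarrow> nat \<Rightarrow> real \<Rightarrow> nat set" where
  "path_prefix conn s t L =
     {(conn t ^^ k) s | k. real k < L \<and> (\<forall>j<k. (conn t ^^ j) s \<noteq> t)}"

definition reducible_with :: "nat set \<Rightarrow> (nat \<Rightarrow> nat \<Rightarrow> real) \<Rightarrow> nat set set \<Rightarrow> real \<Rightarrow>
    (nat \<Rightarrow> nat \<Rightarrow> nat) \<Rightarrow> real \<Rightarrow> real \<Rightarrow> bool" where
  "reducible_with V d E lam conn p C \<longleftrightarrow>
     (\<forall>s\<in>V. \<forall>t\<in>V. s \<noteq> t \<longrightarrow>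
        (\<exists>u\<in>path_prefix conn s t (C * (ln (real (card V))) powr p).
           \<exists>v\<in>V. {u, v} \<in> E \<and> d v t \<le> lam * d s t))"

definition uniformly_rich :: "nat \<Rightarrow> (nat \<Rightarrow> nat \<Rightarrow> real) \<Rightarrow> real \<Rightarrow> real \<Rightarrow> real \<Rightarrow> real \<Rightarrow>
    (nat \<Rightarrow> nat \<Rightarrow> real) \<Rightarrow> bool" where
  "uniformly_rich n d \<gamma> \<alpha> \<theta> M Q \<longleftrightarrow>
     (\<forall>k::int. real_of_int k \<ge> (\<theta> * ln (ln (real n)) - ln \<alpha>) / ln \<gamma> \<longrightarrow>
        (\<forall>i j. i < j \<and> j < n \<and> \<gamma> powr (real_of_int k - 1) < d i j \<and> d i j \<le> \<gamma> powr (real_of_int k) \<longrightarrow>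
           Q i j \<ge> 1 / (M * (ln (real n)) powr \<theta> * \<gamma> powr (real_of_int k))))"

definition random_edges :: "nat \<Rightarrow> (nat \<Rightarrow> nat \<Rightarrow> real) \<Rightarrow> nat set set pmf" where
  "random_edges n Q =
     map_pmf (\<lambda>b. {{i, j} | i j. i < j \<and> j < n \<and> b (i, j)})
       (Pi_pmf {(i, j). i < j \<and> j < n} False (\<lambda>(i, j). bernoulli_pmf (Q i j)))"

end

theory Submission
  imports Defs "HOL-Real_Asymp.Real_Asymp"
begin

text \<open>
  Walk along the local (s,t)-path. If it reaches t within C (log n)^(\<theta>+1) steps, its last
  edge is a substrate edge into t. Otherwise it descends by at least 1 per step, so its first
  C (log n)^(\<theta>+1) - O((log n)^\<theta>) vertices u all lie at distance \<Omega>((log n)^\<theta>) from t.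
  A vertex of D_\<lambda>(u,t) within distance 1 of u is a substrate neighbour of u. If there is none,
  (H1) shows that only O((log n)^\<theta>) vertices of D_\<lambda>(u,t) are too close to u for uniform
  richness to apply, so by (H2) at least half of D_\<lambda>(u,t) is joined to u with probability
  \<ge> 1/(M (log n)^\<theta> \<gamma>^k), i.e. u has total edge probability \<Omega>(1/(log n)^\<theta>) into D_\<lambda>(u,t).
  These candidate edges are pairwise distinct and their probabilities sum to at least 3 log n,
  so all of them are missing with probability at most n^-3; a union bound over the n^2 pairs
  (s,t) bounds the failure probability by 1/n.
\<close>

section \<open>Distance shells\<close>

lemma ceiling_log_le_of_le_powr:
  fixes g x :: real
  assumes "g > 1" "x > 0" "x \<le> g powr real_of_int k"
  shows "\<lceil>log g x\<rceil> \<le> k"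
  using assms by (simp add: log_le_iff ceiling_le_iff)

lemma less_ceiling_log_of_powr_less:
  fixes g x :: real
  assumes "g > 1" "x > 0" "g powr real_of_int k < x"
  shows "k < \<lceil>log g x\<rceil>"
  using assms by (simp add: less_log_iff less_ceiling_iff)

lemma powr_ceiling_log_bounds:
  fixes g x :: real
  assumes "g > 1" "x > 0"
  shows "g powr (real_of_int \<lceil>log g x\<rceil> - 1) < x" "x \<le> g powr real_of_int \<lceil>log g x\<rceil>"
  using assms by (simp_all add: less_log_iff [symmetric] log_le_iff [symmetric]; linarith)+

lemma kvt_eq_ceiling_log:
  assumes "g > 1" "d v t > 0"
  shows "kvt d g v t = \<lceil>log g (d v t)\<rceil>"
  unfolding kvt_def
proof (rule the_equality)
  show "g powr (real_of_int \<lceil>log g (d v t)\<rceil> - 1) < d v t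
      \<and> d v t \<le> g powr real_of_int \<lceil>log g (d v t)\<rceil>"
    using powr_ceiling_log_bounds [OF assms] by blast
next
  fix k assume k: "g powr (real_of_int k - 1) < d v t \<and> d v t \<le> g powr real_of_int k"
  have "k - 1 < \<lceil>log g (d v t)\<rceil>"
    using less_ceiling_log_of_powr_less [OF assms, of "k - 1"] k by simp
  moreover have "\<lceil>log g (d v t)\<rceil> \<le> k"
    using ceiling_log_le_of_le_powr [OF assms] k by blast
  ultimately show "k = \<lceil>log g (d v t)\<rceil>" by linarith
qed

lemma sum_powers_le:
  fixes g :: real
  assumes "g > 1"
  shows "(\<Sum>i=1..m. g ^ i) \<le> g * g ^ m / (g - 1)"
proof (induction m)
  case (Suc m)
  have "(\<Sum>i=1..Suc m. g ^ i) \<le> g * g ^ m / (g - 1) + g ^ Suc m"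
    using Suc by simp
  also have "\<dots> = g * g ^ Suc m / (g - 1)"
    using assms by (simp add: field_simps)
  finally show ?case .
qed (use assms in simp)

lemma H1_card_le:
  assumes H1: "H1 V d g A \<alpha>" and g: "g > 1" and V: "finite V" and u: "u \<in> V"
    and m: "int m \<le> \<lceil>log g (real (card V))\<rceil>"
  shows "real (card {v\<in>V. 1 < d u v \<and> d u v \<le> g ^ m}) \<le> A * g * g ^ m / (g - 1)"
proof -
  define shell where
    "shell i = {v\<in>V. g powr (real_of_int (int i) - 1) < d u v \<and> d u v \<le> g powr real_of_int (int i)}"
    for i :: nat
  have cover: "{v\<in>V. 1 < d u v \<and> d u v \<le> g ^ m} \<subseteq> (\<Union>i\<in>{1..m}. shell i)"
  proof
    fix v assume v: "v \<in> {v\<in>V. 1 < d u v \<and> d u v \<le> g ^ m}"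
    define k where "k = \<lceil>log g (d u v)\<rceil>"
    have dpos: "d u v > 0" using v by auto
    have "0 < k"
      using less_ceiling_log_of_powr_less [OF g dpos, of 0] v g unfolding k_def by simp
    moreover have "k \<le> int m"
      using ceiling_log_le_of_le_powr [OF g dpos, of "int m"] v g unfolding k_def
      by (simp add: powr_realpow)
    moreover have "v \<in> shell (nat k)"
      using powr_ceiling_log_bounds [OF g dpos] v \<open>0 < k\<close> unfolding shell_def k_def by auto
    ultimately show "v \<in> (\<Union>i\<in>{1..m}. shell i)" by force
  qed
  have "card {v\<in>V. 1 < d u v \<and> d u v \<le> g ^ m} \<le> (\<Sum>i=1..m. card (shell i))"
    using card_mono [OF _ cover] card_UN_le [of "{1..m}" shell] V
    by (simp add: shell_def)
  hence "real (card {v\<in>V. 1 < d u v \<and> d u v \<le> g ^ m}) \<le> (\<Sum>i=1..m. real (card (shell i)))"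
    by (simp flip: of_nat_sum)
  also have "\<dots> \<le> (\<Sum>i=1..m. A * g ^ i)"
  proof (rule sum_mono)
    fix i assume i: "i \<in> {1..m}"
    have "card (shell i) = Pk V d g (int i) u"
      unfolding shell_def Pk_def by simp
    moreover have "real (Pk V d g (int i) u) \<le> A * g powr real_of_int (int i)"
    proof -
      have "1 \<le> int i" "int i \<le> \<lceil>log g (real (card V))\<rceil>" using i m by auto
      thus ?thesis using H1 u unfolding H1_def by blast
    qed
    ultimately show "real (card (shell i)) \<le> A * g ^ i"
      using g by (simp add: powr_realpow)
  qed
  also have "\<dots> = A * (\<Sum>i=1..m. g ^ i)"
    by (simp add: sum_distrib_left)
  also have "\<dots> \<le> A * (g * g ^ m / (g - 1))"
    using sum_powers_le [OF g, of m] H1 unfolding H1_def by (intro mult_left_mono) auto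
  finally show ?thesis by simp
qed

section \<open>Substrates and local paths\<close>

lemma substrate_step:
  assumes "substrate V d E0 conn" "s \<in> V" "t \<in> V" "s \<noteq> t"
  shows "conn t s \<in> V" "{s, conn t s} \<in> E0" "d (conn t s) t \<le> d s t - 1"
  using assms unfolding substrate_def by auto

lemma substrate_dist_ge_1:
  assumes "is_geometry V d" "substrate V d E0 conn" "u \<in> V" "t \<in> V" "u \<noteq> t"
  shows "1 \<le> d u t"
  using substrate_step [OF assms(2-5)] assms(1,4) unfolding is_geometry_def by force

lemma substrate_short_edge:
  assumes geo: "is_geometry V d" and sub: "substrate V d E0 conn"
    and "u \<in> V" "v \<in> V" "u \<noteq> v" "d u v \<le> 1"
  shows "{u, v} \<in> E0"
proof -
  have "d (conn v u) v \<le> 0" "conn v u \<in> V"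
    using substrate_step [OF sub assms(3-5)] assms(6) by auto
  hence "conn v u = v"
    using geo \<open>v \<in> V\<close> unfolding is_geometry_def by force
  thus ?thesis using substrate_step(2) [OF sub assms(3-5)] by simp
qed

lemma local_path_descends:
  assumes sub: "substrate V d E0 conn" and "s \<in> V" "t \<in> V" "\<forall>l<i. (conn t ^^ l) s \<noteq> t"
  shows "(conn t ^^ i) s \<in> V \<and> d ((conn t ^^ i) s) t \<le> d s t - real i"
  using assms(4)
proof (induction i)
  case (Suc i)
  hence "(conn t ^^ i) s \<in> V" "d ((conn t ^^ i) s) t \<le> d s t - real i" "(conn t ^^ i) s \<noteq> t"
    by auto
  thus ?case using substrate_step [OF sub _ \<open>t \<in> V\<close>] by force
qed (use assms in simp)

lemma local_path_descends_from:
  assumes sub: "substrate V d E0 conn" and s: "s \<in> V" and t: "t \<in> V"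
    and avoid: "\<forall>l<j + i. (conn t ^^ l) s \<noteq> t"
  shows "(conn t ^^ (i + j)) s \<in> V \<and> d ((conn t ^^ (i + j)) s) t \<le> d ((conn t ^^ j) s) t - real i"
proof -
  have "(conn t ^^ j) s \<in> V" using local_path_descends [OF sub s t] avoid by simp
  moreover have "\<forall>l<i. (conn t ^^ l) ((conn t ^^ j) s) \<noteq> t"
  proof (intro allI impI)
    fix l assume "l < i"
    hence "(conn t ^^ (l + j)) s \<noteq> t" using avoid by simp
    thus "(conn t ^^ l) ((conn t ^^ j) s) \<noteq> t" by (simp add: funpow_add)
  qed
  ultimately show ?thesis
    using local_path_descends [OF sub _ t] by (simp add: funpow_add)
qed

lemma path_prefix_memI:
  "real k < L \<Longrightarrow> \<forall>j<k. (conn t ^^ j) s \<noteq> t \<Longrightarrow> (conn t ^^ k) s \<in> path_prefix conn s t L"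
  unfolding path_prefix_def by blast

section \<open>Independent edges\<close>

lemma prob_Pi_pmf_bernoulli_none_le:
  assumes I: "finite I" and S: "S \<subseteq> I" and p: "\<And>x. x \<in> I \<Longrightarrow> 0 \<le> p x \<and> p x \<le> 1"
  shows "measure_pmf.prob (Pi_pmf I False (\<lambda>x. bernoulli_pmf (p x))) {b. \<forall>x\<in>S. \<not> b x}
           \<le> exp (- (\<Sum>x\<in>S. p x))"
proof -
  have "{b. \<forall>x\<in>S. \<not> b x} = Pi I (\<lambda>x. if x \<in> S then {False} else UNIV)"
    using S by (auto simp: Pi_def)
  hence "measure_pmf.prob (Pi_pmf I False (\<lambda>x. bernoulli_pmf (p x))) {b. \<forall>x\<in>S. \<not> b x}
      = (\<Prod>x\<in>I. measure_pmf.prob (bernoulli_pmf (p x)) (if x \<in> S then {False} else UNIV))"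
    by (simp add: measure_Pi_pmf_Pi [OF I])
  also have "\<dots> = (\<Prod>x\<in>I. if x \<in> S then 1 - p x else 1)"
    using p by (intro prod.cong) (auto simp: measure_pmf_single pmf_bernoulli_False)
  also have "\<dots> = (\<Prod>x\<in>S. 1 - p x)"
    using S I by (simp add: prod.If_cases Int_absorb1)
  also have "\<dots> \<le> (\<Prod>x\<in>S. exp (- p x))"
    using S p exp_ge_add_one_self [of "- p _"] by (intro prod_mono) auto
  also have "\<dots> = exp (- (\<Sum>x\<in>S. p x))"
    by (simp add: exp_sum [OF finite_subset [OF S I], symmetric] sum_negf)
  finally show ?thesis .
qed

lemma inj_on_min_max_if_oriented:
  fixes f :: "'a :: linorder \<Rightarrow> 'b :: order"
  assumes "\<And>u v. (u, v) \<in> T \<Longrightarrow> f v < f u"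
  shows "inj_on (\<lambda>(u, v). (min u v, max u v)) T"
proof (rule inj_onI, clarsimp)
  fix u v u' v' assume uv: "(u, v) \<in> T" and uv': "(u', v') \<in> T"
    and eq: "min u v = min u' v'" "max u v = max u' v'"
  hence "(u = u' \<and> v = v') \<or> (u = v' \<and> v = u')"
    by (auto simp: min_def max_def split: if_splits)
  thus "u = u' \<and> v = v'"
    using assms [OF uv] assms [OF uv'] by auto
qed

section \<open>A single large vertex count\<close>

text \<open>The last three assumptions are all that is used about n being large; they hold eventually.\<close>

locale large_rich_graph =
  fixes n :: nat and dd :: "nat \<Rightarrow> nat \<Rightarrow> real" and E0 :: "nat set set"
    and cn :: "nat \<Rightarrow> nat \<Rightarrow> nat" and q :: "nat \<Rightarrow> nat \<Rightarrow> real"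
    and g A \<alpha> \<phi> lam \<theta> M :: real
  assumes coh: "coherent {..<n} dd g A \<alpha> \<phi> lam"
    and sub: "substrate {..<n} dd E0 cn"
    and theta: "\<theta> > 0" and M_pos: "M > 0"
    and q_prob: "\<And>i j. i < j \<Longrightarrow> j < n \<Longrightarrow> 0 \<le> q i j \<and> q i j \<le> 1"
    and rich: "uniformly_rich n dd g \<alpha> \<theta> M q"
    and logn_ge_1: "1 \<le> ln (real n)"
    and logn_powr_le: "ln (real n) powr \<theta> \<le> \<alpha> * real n"
    and logn_large: "A * g / ((g - 1) * \<alpha>) / M + \<phi> / (2 * M) \<le> ln (real n)"
begin

lemma geometry: "is_geometry {..<n} dd" and g_gt_1: "g > 1" and H1: "H1 {..<n} dd g A \<alpha>"
  using coh unfolding coherent_def by auto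

lemma A_gt_1: "A > 1" and alpha_pos: "\<alpha> > 0"
  using H1 unfolding H1_def by auto

lemma phi_pos: "\<phi> > 0" and lam_pos: "lam > 0" and lam_lt_1: "lam < 1"
  and H2: "\<And>v t. v < n \<Longrightarrow> t < n \<Longrightarrow> v \<noteq> t \<Longrightarrow>
             \<phi> * g powr real_of_int (kvt dd g v t) \<le> real (card (Dlam {..<n} dd g lam v t))"
  using coh unfolding coherent_def H2_def by auto

lemma dist_sym: "u < n \<Longrightarrow> v < n \<Longrightarrow> dd u v = dd v u"
  and dist_nonneg: "u < n \<Longrightarrow> v < n \<Longrightarrow> 0 \<le> dd u v"
  and dist_eq_0_iff: "u < n \<Longrightarrow> v < n \<Longrightarrow> dd u v = 0 \<longleftrightarrow> u = v"
  using geometry unfolding is_geometry_def by auto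

lemma dist_ge_1: "u < n \<Longrightarrow> t < n \<Longrightarrow> u \<noteq> t \<Longrightarrow> 1 \<le> dd u t"
  using substrate_dist_ge_1 [OF geometry sub] by simp

text \<open>
  Pairs farther apart than near_radius lie in shells k \<ge> k_\<theta>, where uniform richness applies,
  and by (H1) each vertex has at most near_const (log n)^\<theta> vertices closer than that. Hence a
  vertex farther than far_radius from t has half of its D_\<lambda> set beyond near_radius, and the
  first far_steps vertices of a local path that avoids t for budget steps are that far from t.
\<close>

definition "logn = ln (real n)"
definition "k_theta = (\<theta> * ln logn - ln \<alpha>) / ln g"
definition "near_radius = g powr (\<lceil>k_theta\<rceil> - 1)"
definition "near_const = A * g / ((g - 1) * \<alpha>)"
definition "far_radius = 2 * near_const * logn powr \<theta> / \<phi>"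
definition "C_red = 8 * M / \<phi>"
definition "budget = C_red * logn powr (\<theta> + 1)"
definition "far_steps = nat \<lceil>budget - far_radius - 1\<rceil>"

lemma logn_pos: "0 < logn"
  using logn_ge_1 unfolding logn_def by simp

lemma n_pos: "0 < real n"
  using logn_ge_1 by (cases "n = 0") auto

lemma logn_powr_ge_1: "1 \<le> logn powr \<theta>"
  using logn_ge_1 theta unfolding logn_def by (simp add: ge_one_powr_ge_zero)

lemma near_const_pos: "0 < near_const" and far_radius_nonneg: "0 \<le> far_radius"
  using A_gt_1 g_gt_1 alpha_pos phi_pos logn_pos
  unfolding near_const_def far_radius_def by auto

lemma g_powr_k_theta: "g powr k_theta = logn powr \<theta> / \<alpha>"
proof -
  have "k_theta * ln g = \<theta> * ln logn - ln \<alpha>"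
    using g_gt_1 unfolding k_theta_def by simp
  thus ?thesis
    using g_gt_1 logn_pos alpha_pos by (simp add: powr_def exp_diff mult.commute)
qed

lemma near_radius_lt: "near_radius < logn powr \<theta> / \<alpha>"
  using g_gt_1 unfolding near_radius_def g_powr_k_theta [symmetric] by simp linarith

lemma near_exponent_le: "\<lceil>k_theta\<rceil> - 1 \<le> \<lceil>log g (real n)\<rceil>"
proof -
  have "g powr k_theta \<le> real n"
    using logn_powr_le alpha_pos unfolding g_powr_k_theta logn_def by (simp add: field_simps)
  hence "k_theta \<le> log g (real n)"
    using g_gt_1 n_pos by (simp add: le_log_iff)
  thus ?thesis by linarith
qed

lemma card_near_le:
  assumes u: "u < n"
  shows "real (card {v\<in>{..<n}. 1 < dd u v \<and> dd u v \<le> near_radius}) \<le> near_const * logn powr \<theta>"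
proof (cases "\<lceil>k_theta\<rceil> - 1 \<le> 0")
  case True
  hence "near_radius \<le> g powr 0"
    using g_gt_1 unfolding near_radius_def by (intro powr_mono) auto
  hence empty: "{v\<in>{..<n}. 1 < dd u v \<and> dd u v \<le> near_radius} = {}" using g_gt_1 by auto
  show ?thesis unfolding empty using near_const_pos by simp
next
  case False
  define m where "m = nat (\<lceil>k_theta\<rceil> - 1)"
  have radius: "near_radius = g ^ m"
    using False g_gt_1 unfolding near_radius_def m_def by (simp add: powr_realpow [symmetric])
  have "real (card {v\<in>{..<n}. 1 < dd u v \<and> dd u v \<le> near_radius}) \<le> A * g * g ^ m / (g - 1)"
    unfolding radius
    by (rule H1_card_le [OF H1 g_gt_1]) (use u near_exponent_le False in \<open>auto simp: m_def\<close>)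
  also have "\<dots> \<le> A * g * (logn powr \<theta> / \<alpha>) / (g - 1)"
    using near_radius_lt A_gt_1 g_gt_1 unfolding radius
    by (intro divide_right_mono mult_left_mono) auto
  also have "\<dots> = near_const * logn powr \<theta>"
    unfolding near_const_def by simp
  finally show ?thesis .
qed

lemma rich_prob_ge:
  assumes u: "u < n" and v: "v < n"
    and near: "near_radius < dd u v" and shell: "dd u v \<le> g powr real_of_int k"
  shows "1 / (M * logn powr \<theta> * g powr real_of_int k) \<le> q (min u v) (max u v)"
proof -
  define k' where "k' = \<lceil>log g (dd u v)\<rceil>"
  have "0 < near_radius" using g_gt_1 unfolding near_radius_def by simp
  hence dpos: "0 < dd u v" using near by linarith
  hence "u \<noteq> v" using dist_eq_0_iff [OF u v] by auto
  have "\<lceil>k_theta\<rceil> - 1 < k'"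
    using less_ceiling_log_of_powr_less [OF g_gt_1 dpos] near
    unfolding k'_def near_radius_def by simp
  hence rich_shell: "k_theta \<le> real_of_int k'" by linarith
  have "k' \<le> k"
    using ceiling_log_le_of_le_powr [OF g_gt_1 dpos shell] unfolding k'_def .
  have "dd (min u v) (max u v) = dd u v"
    using dist_sym [OF u v] by (simp add: min_def max_def)
  hence "g powr (real_of_int k' - 1) < dd (min u v) (max u v)"
    "dd (min u v) (max u v) \<le> g powr real_of_int k'"
    using powr_ceiling_log_bounds [OF g_gt_1 dpos] unfolding k'_def by auto
  moreover have "min u v < max u v" "max u v < n"
    using \<open>u \<noteq> v\<close> u v by (auto simp: min_def max_def)
  ultimately have "1 / (M * logn powr \<theta> * g powr real_of_int k') \<le> q (min u v) (max u v)"
    using rich [unfolded uniformly_rich_def, rule_format, of k' "min u v" "max u v"] rich_shell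
    unfolding k_theta_def logn_def by blast
  moreover have "g powr real_of_int k' \<le> g powr real_of_int k"
    using \<open>k' \<le> k\<close> g_gt_1 by simp
  hence "1 / (M * logn powr \<theta> * g powr real_of_int k)
      \<le> 1 / (M * logn powr \<theta> * g powr real_of_int k')"
    using M_pos logn_pos g_gt_1 by (intro divide_left_mono mult_left_mono mult_pos_pos) auto
  ultimately show ?thesis by linarith
qed

definition "good u t = {v\<in>Dlam {..<n} dd g lam u t. near_radius < dd u v}"

lemma Dlam_closer:
  assumes u: "u < n" and t: "t < n" and "u \<noteq> t" and v: "v \<in> Dlam {..<n} dd g lam u t"
  shows "v < n" "dd v t \<le> lam * dd u t" "dd v t < dd u t" "v \<noteq> u"
proof -
  show "v < n" "dd v t \<le> lam * dd u t" using v unfolding Dlam_def by auto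
  moreover have "0 < dd u t" using dist_ge_1 [OF u t \<open>u \<noteq> t\<close>] by simp
  moreover have "lam * dd u t < dd u t" using lam_lt_1 \<open>0 < dd u t\<close> by simp
  ultimately show "dd v t < dd u t" by linarith
  thus "v \<noteq> u" by auto
qed

lemma card_good_ge:
  assumes u: "u < n" and t: "t < n" and ut: "u \<noteq> t" and far: "far_radius < dd u t"
    and not_short: "\<forall>v\<in>Dlam {..<n} dd g lam u t. 1 < dd u v"
  shows "\<phi> * g powr real_of_int (kvt dd g u t) / 2 \<le> real (card (good u t))"
proof -
  define D where "D = Dlam {..<n} dd g lam u t"
  define near where "near = {v\<in>{..<n}. 1 < dd u v \<and> dd u v \<le> near_radius}"
  have "D \<subseteq> good u t \<union> near"
    using not_short unfolding D_def good_def near_def Dlam_def by auto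
  hence "card D \<le> card (good u t \<union> near)"
    by (intro card_mono) (auto simp: good_def Dlam_def near_def)
  also have "\<dots> \<le> card (good u t) + card near"
    by (rule card_Un_le)
  finally have "card D \<le> card (good u t) + card near" .
  hence "real (card D) \<le> real (card (good u t)) + near_const * logn powr \<theta>"
    using card_near_le [OF u] unfolding near_def by linarith
  moreover have "\<phi> * g powr real_of_int (kvt dd g u t) \<le> real (card D)"
    using H2 [OF u t ut] unfolding D_def .
  moreover have "2 * near_const * logn powr \<theta> < \<phi> * g powr real_of_int (kvt dd g u t)"
  proof -
    have "0 < dd u t" using dist_ge_1 [OF u t ut] by simp
    hence "dd u t \<le> g powr real_of_int (kvt dd g u t)"
      using powr_ceiling_log_bounds (2) [OF g_gt_1] kvt_eq_ceiling_log [OF g_gt_1] by simp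
    hence "\<phi> * dd u t \<le> \<phi> * g powr real_of_int (kvt dd g u t)"
      using phi_pos by simp
    moreover have "2 * near_const * logn powr \<theta> < \<phi> * dd u t"
      using far phi_pos unfolding far_radius_def by (simp add: field_simps)
    ultimately show ?thesis by linarith
  qed
  ultimately show ?thesis by linarith
qed

lemma short_edge_or_good_sum:
  assumes u: "u < n" and t: "t < n" and ut: "u \<noteq> t" and far: "far_radius < dd u t"
  shows "(\<exists>v\<in>Dlam {..<n} dd g lam u t. {u, v} \<in> E0)
      \<or> \<phi> / (2 * M * logn powr \<theta>) \<le> (\<Sum>v\<in>good u t. q (min u v) (max u v))"
proof (cases "\<exists>v\<in>Dlam {..<n} dd g lam u t. dd u v \<le> 1")
  case True
  then obtain v where v: "v \<in> Dlam {..<n} dd g lam u t" "dd u v \<le> 1" by blast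
  hence "{u, v} \<in> E0"
    using substrate_short_edge [OF geometry sub] Dlam_closer [OF u t ut] u by (metis lessThan_iff)
  thus ?thesis using v by blast
next
  case False
  hence not_short: "\<forall>v\<in>Dlam {..<n} dd g lam u t. 1 < dd u v" by auto
  define k where "k = kvt dd g u t"
  define c where "c = M * logn powr \<theta> * g powr real_of_int k"
  have c_pos: "0 < c" using M_pos logn_pos g_gt_1 unfolding c_def by simp
  have "1 / c \<le> q (min u v) (max u v)" if v: "v \<in> good u t" for v
    using rich_prob_ge [OF u] v unfolding good_def Dlam_def c_def k_def by auto
  hence "real (card (good u t)) / c \<le> (\<Sum>v\<in>good u t. q (min u v) (max u v))"
    using sum_mono [of "good u t" "\<lambda>_. 1 / c"] by simp
  moreover have "\<phi> * g powr real_of_int k / 2 / c \<le> real (card (good u t)) / c"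
    using card_good_ge [OF u t ut far not_short] c_pos unfolding k_def
    by (intro divide_right_mono) auto
  moreover have "\<phi> * g powr real_of_int k / 2 / c = \<phi> / (2 * M * logn powr \<theta>)"
    using g_gt_1 unfolding c_def by (simp add: field_simps)
  ultimately show ?thesis by linarith
qed

abbreviation lpath :: "nat \<Rightarrow> nat \<Rightarrow> nat \<Rightarrow> nat" where
  "lpath s t j \<equiv> (cn t ^^ j) s"

definition reduced :: "nat \<Rightarrow> nat \<Rightarrow> nat set set \<Rightarrow> bool" where
  "reduced s t E \<longleftrightarrow>
     (\<exists>u\<in>path_prefix cn s t budget. \<exists>v\<in>{..<n}. {u, v} \<in> E \<and> dd v t \<le> lam * dd s t)"

lemma reduced_mono: "reduced s t E \<Longrightarrow> E \<subseteq> E' \<Longrightarrow> reduced s t E'"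
  unfolding reduced_def by blast

lemma reduced_if_reaches_target:
  assumes s: "s < n" and t: "t < n" and st: "s \<noteq> t"
    and reach: "\<exists>m. real m \<le> budget \<and> lpath s t m = t"
  shows "reduced s t E0"
proof -
  define m where "m = (LEAST m. real m \<le> budget \<and> lpath s t m = t)"
  have m: "real m \<le> budget" "lpath s t m = t"
    using LeastI_ex [OF reach] unfolding m_def by auto
  have before: "\<forall>l<m. lpath s t l \<noteq> t"
  proof (intro allI impI)
    fix l assume "l < m"
    hence "\<not> (real l \<le> budget \<and> lpath s t l = t)" unfolding m_def by (rule not_less_Least)
    thus "lpath s t l \<noteq> t" using \<open>l < m\<close> m(1) by auto
  qed
  obtain k where k: "m = Suc k" using m(2) st by (cases m) auto
  define u where "u = lpath s t k"
  have u: "u < n" "u \<noteq> t"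
    using local_path_descends [OF sub, of s t k] s t before k unfolding u_def by auto
  have "cn t u = t" using m(2) k unfolding u_def by simp
  hence "{u, t} \<in> E0" using substrate_step (2) [OF sub, of u t] u t by simp
  moreover have "u \<in> path_prefix cn s t budget"
    unfolding u_def using m(1) k before by (intro path_prefix_memI) auto
  moreover have "dd t t \<le> lam * dd s t"
    using dist_eq_0_iff [OF t t] dist_nonneg [OF s t] lam_pos by simp
  ultimately show ?thesis unfolding reduced_def using t by blast
qed

lemma far_steps_lt:
  assumes "j < far_steps"
  shows "real j + far_radius + 1 < budget"
proof -
  have "int j < \<lceil>budget - far_radius - 1\<rceil>"
    using assms zless_nat_eq_int_zless unfolding far_steps_def by blast
  hence "real_of_int (int j) < budget - far_radius - 1"
    by (simp only: less_ceiling_iff)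
  thus ?thesis by simp
qed

lemma budget_sufficient: "3 * logn \<le> (budget - far_radius - 1) * (\<phi> / (2 * M * logn powr \<theta>))"
proof -
  define P where "P = logn powr \<theta>"
  have P: "1 \<le> P" using logn_powr_ge_1 unfolding P_def .
  have "budget = 8 * M / \<phi> * logn * P"
    using logn_pos unfolding budget_def C_red_def P_def by (simp add: powr_add)
  hence "(budget - far_radius - 1) * (\<phi> / (2 * M * P))
      = 4 * logn - near_const / M - \<phi> / (2 * M * P)"
    using M_pos phi_pos P unfolding far_radius_def P_def [symmetric] by (simp add: field_simps)
  moreover have "\<phi> / (2 * M * P) \<le> \<phi> / (2 * M)"
    using M_pos phi_pos P by (intro divide_left_mono) (auto simp: mult_le_cancel_left1 mult_pos_pos)
  ultimately show ?thesis
    using logn_large logn_ge_1 unfolding near_const_def logn_def P_def by linarith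
qed

definition "pairs = {(i, j). i < j \<and> j < n}"
definition "edges_of b = {{i, j} | i j. i < j \<and> j < n \<and> b (i, j)}"
definition "coins = Pi_pmf pairs False (\<lambda>x. bernoulli_pmf (case_prod q x))"

lemma finite_pairs: "finite pairs"
  unfolding pairs_def by (rule finite_subset [of _ "{..<n} \<times> {..<n}"]) auto

lemma random_edges_eq: "random_edges n q = map_pmf edges_of coins"
  unfolding random_edges_def coins_def pairs_def edges_of_def by (simp add: case_prod_beta')

lemma edges_of_memI:
  assumes "u < n" "v < n" "u \<noteq> v" "b (min u v, max u v)"
  shows "{u, v} \<in> edges_of b"
proof -
  have "{u, v} = {min u v, max u v}" "min u v < max u v" "max u v < n"
    using assms(1-3) by (auto simp: min_def max_def)
  thus ?thesis using assms(4) unfolding edges_of_def by blast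
qed

lemma sum_good_pairs:
  assumes U: "U \<subseteq> {..<n}" and t: "t < n" "t \<notin> U"
  defines "S \<equiv> (\<lambda>(u, v). (min u v, max u v)) ` Sigma U (\<lambda>u. good u t)"
  shows "S \<subseteq> pairs" and "(\<Sum>x\<in>S. case_prod q x) = (\<Sum>u\<in>U. \<Sum>v\<in>good u t. q (min u v) (max u v))"
proof -
  have closer: "v < n \<and> dd v t < dd u t \<and> v \<noteq> u" if "(u, v) \<in> Sigma U (\<lambda>u. good u t)" for u v
    using Dlam_closer [of u t v] that U t unfolding good_def by auto
  show "S \<subseteq> pairs"
  proof
    fix x assume "x \<in> S"
    then obtain u v where x: "x = (min u v, max u v)" and uv: "(u, v) \<in> Sigma U (\<lambda>u. good u t)"
      unfolding S_def by auto
    have "u < n" "v < n" "u \<noteq> v" using closer [OF uv] uv U by auto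
    thus "x \<in> pairs" unfolding x pairs_def by (auto simp: min_def max_def)
  qed
  have inj: "inj_on (\<lambda>(u, v). (min u v, max u v)) (Sigma U (\<lambda>u. good u t))"
    by (rule inj_on_min_max_if_oriented [where f = "\<lambda>x. dd x t"]) (use closer in blast)
  have "finite U" "\<And>u. finite (good u t)"
    using finite_subset [OF U] unfolding good_def Dlam_def by auto
  thus "(\<Sum>x\<in>S. case_prod q x) = (\<Sum>u\<in>U. \<Sum>v\<in>good u t. q (min u v) (max u v))"
    unfolding S_def sum.reindex [OF inj] by (simp add: sum.Sigma case_prod_beta')
qed

definition "candidates s t =
  (\<lambda>(u, v). (min u v, max u v)) ` Sigma (lpath s t ` {..<far_steps}) (\<lambda>u. good u t)"

context
  fixes s t :: nat
  assumes s: "s < n" and t: "t < n"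
    and avoid: "\<And>m. real m \<le> budget \<Longrightarrow> lpath s t m \<noteq> t"
begin

lemma far_prefix:
  assumes "u \<in> lpath s t ` {..<far_steps}"
  shows "u < n" "u \<in> path_prefix cn s t budget" "dd u t \<le> dd s t" "far_radius < dd u t"
    and "u \<noteq> t"
proof -
  obtain j where j: "j < far_steps" and u: "u = lpath s t j" using assms by auto
  define i where "i = nat \<lfloor>far_radius\<rfloor>"
  have i: "real i \<le> far_radius" "far_radius < real i + 1"
    using far_radius_nonneg unfolding i_def by linarith+
  have j_budget: "real j + real i + 1 < budget"
    using far_steps_lt [OF j] i by linarith
  have avoid': "\<forall>l<j + i. lpath s t l \<noteq> t" "lpath s t (i + j) \<noteq> t"
    using avoid j_budget by (auto simp: add.commute)
  show "u < n" "dd u t \<le> dd s t"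
    using local_path_descends [OF sub, of s t j] s t avoid' unfolding u by auto
  show "u \<in> path_prefix cn s t budget"
    using j_budget avoid' unfolding u by (intro path_prefix_memI) auto
  have "lpath s t (i + j) < n \<and> dd (lpath s t (i + j)) t \<le> dd u t - real i"
    using local_path_descends_from [OF sub, of s t j i] s t avoid'(1) unfolding u by simp
  moreover have "1 \<le> dd (lpath s t (i + j)) t"
    using dist_ge_1 [OF _ t avoid'(2)] calculation by blast
  ultimately show "far_radius < dd u t" using i by linarith
  thus "u \<noteq> t" using dist_eq_0_iff [OF t t] far_radius_nonneg by auto
qed

lemma inj_on_far_prefix: "inj_on (lpath s t) {..<far_steps}"
proof -
  have neq: "lpath s t j \<noteq> lpath s t (i + j)" if "0 < i" "i + j < far_steps" for i j
  proof -
    have "\<forall>l<j + i. lpath s t l \<noteq> t"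
      using avoid far_steps_lt [OF that(2)] far_radius_nonneg by (auto simp: add.commute)
    thus ?thesis using local_path_descends_from [OF sub, of s t j i] s t that(1) by auto
  qed
  show ?thesis
  proof (rule inj_onI)
    fix j j' assume "j \<in> {..<far_steps}" "j' \<in> {..<far_steps}" "lpath s t j = lpath s t j'"
    thus "j = j'"
      using neq [of "j' - j" j] neq [of "j - j'" j'] by (cases j j' rule: linorder_cases) auto
  qed
qed

lemma reduced_via_far_prefix:
  assumes u: "u \<in> lpath s t ` {..<far_steps}" and v: "v \<in> Dlam {..<n} dd g lam u t"
    and edge: "{u, v} \<in> E"
  shows "reduced s t E"
proof -
  have "v < n" "dd v t \<le> lam * dd u t"
    using Dlam_closer [of u t v] far_prefix [OF u] t v by auto
  moreover have "lam * dd u t \<le> lam * dd s t"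
    using far_prefix (3) [OF u] lam_pos by simp
  ultimately show ?thesis
    using far_prefix (2) [OF u] edge unfolding reduced_def by fastforce
qed

lemma candidates_subset_pairs: "candidates s t \<subseteq> pairs"
  and sum_candidates: "(\<Sum>x\<in>candidates s t. case_prod q x)
      = (\<Sum>u\<in>lpath s t ` {..<far_steps}. \<Sum>v\<in>good u t. q (min u v) (max u v))"
  using sum_good_pairs [of "lpath s t ` {..<far_steps}" t] far_prefix t
  unfolding candidates_def by blast+

lemma candidate_reduces:
  assumes "x \<in> candidates s t" "b x"
  shows "reduced s t (E0 \<union> edges_of b)"
proof -
  obtain u v where u: "u \<in> lpath s t ` {..<far_steps}" and v: "v \<in> good u t"
    and b: "b (min u v, max u v)"
    using assms unfolding candidates_def by auto
  have "{u, v} \<in> edges_of b"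
    using edges_of_memI Dlam_closer [of u t v] far_prefix [OF u] b v t unfolding good_def by blast
  thus ?thesis using reduced_via_far_prefix [OF u] v unfolding good_def by blast
qed

lemma sum_candidates_ge:
  assumes no_short: "\<forall>u\<in>lpath s t ` {..<far_steps}. \<forall>v\<in>Dlam {..<n} dd g lam u t. {u, v} \<notin> E0"
  shows "3 * logn \<le> (\<Sum>x\<in>candidates s t. case_prod q x)"
proof -
  let ?c = "\<phi> / (2 * M * logn powr \<theta>)"
  have "budget - far_radius - 1 \<le> real far_steps"
    unfolding far_steps_def by linarith
  hence "(budget - far_radius - 1) * ?c \<le> real far_steps * ?c"
    using phi_pos M_pos by (intro mult_right_mono) auto
  hence "3 * logn \<le> real far_steps * ?c"
    using budget_sufficient by linarith
  also have "\<dots> = (\<Sum>u\<in>lpath s t ` {..<far_steps}. ?c)"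
    using card_image [OF inj_on_far_prefix] by simp
  also have "\<dots> \<le> (\<Sum>u\<in>lpath s t ` {..<far_steps}. \<Sum>v\<in>good u t. q (min u v) (max u v))"
  proof (rule sum_mono)
    fix u assume u: "u \<in> lpath s t ` {..<far_steps}"
    thus "?c \<le> (\<Sum>v\<in>good u t. q (min u v) (max u v))"
      using short_edge_or_good_sum [of u t] far_prefix [OF u] no_short t by blast
  qed
  finally show ?thesis unfolding sum_candidates .
qed

end

lemma reduced_or_many_pairs:
  assumes s: "s < n" and t: "t < n" and st: "s \<noteq> t"
  shows "reduced s t E0 \<or> (\<exists>S\<subseteq>pairs. 3 * logn \<le> (\<Sum>x\<in>S. case_prod q x)
           \<and> (\<forall>b. (\<exists>x\<in>S. b x) \<longrightarrow> reduced s t (E0 \<union> edges_of b)))"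
proof (cases "\<exists>m. real m \<le> budget \<and> lpath s t m = t")
  case True
  thus ?thesis using reduced_if_reaches_target [OF s t st] by blast
next
  case False
  hence avoid: "\<And>m. real m \<le> budget \<Longrightarrow> lpath s t m \<noteq> t" by blast
  show ?thesis
  proof (cases "\<exists>u\<in>lpath s t ` {..<far_steps}. \<exists>v\<in>Dlam {..<n} dd g lam u t. {u, v} \<in> E0")
    case True
    thus ?thesis using reduced_via_far_prefix [OF s t avoid] by blast
  next
    case False
    thus ?thesis
      using candidates_subset_pairs [OF s t avoid] sum_candidates_ge [OF s t avoid]
        candidate_reduces [OF s t avoid] by blast
  qed
qed

lemma prob_not_reduced_le:
  assumes s: "s < n" and t: "t < n"
  shows "measure_pmf.prob coins {b. s \<noteq> t \<and> \<not> reduced s t (E0 \<union> edges_of b)} \<le> 1 / real n ^ 3"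
proof (cases "s \<noteq> t \<and> \<not> reduced s t E0")
  case False
  hence empty: "{b. s \<noteq> t \<and> \<not> reduced s t (E0 \<union> edges_of b)} = {}"
    using reduced_mono by blast
  show ?thesis unfolding empty by simp
next
  case True
  then obtain S where S: "S \<subseteq> pairs" "3 * logn \<le> (\<Sum>x\<in>S. case_prod q x)"
    and hit: "\<And>b. \<exists>x\<in>S. b x \<Longrightarrow> reduced s t (E0 \<union> edges_of b)"
    using reduced_or_many_pairs [OF s t] by blast
  have "measure_pmf.prob coins {b. s \<noteq> t \<and> \<not> reduced s t (E0 \<union> edges_of b)}
      \<le> measure_pmf.prob coins {b. \<forall>x\<in>S. \<not> b x}"
    using hit by (intro measure_pmf.finite_measure_mono) auto
  also have "\<dots> \<le> exp (- (\<Sum>x\<in>S. case_prod q x))"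
    unfolding coins_def using S(1) q_prob
    by (intro prob_Pi_pmf_bernoulli_none_le finite_pairs) (auto simp: pairs_def)
  also have "\<dots> \<le> exp (- (3 * logn))"
    using S(2) by simp
  also have "\<dots> = 1 / real n ^ 3"
    using exp_of_nat_mult [of 3 logn] n_pos unfolding logn_def
    by (simp add: exp_minus inverse_eq_divide)
  finally show ?thesis .
qed

lemma prob_reducible_ge:
  "1 - 1 / real n \<le> measure_pmf.prob (random_edges n q)
     {Eq. reducible_with {..<n} dd (E0 \<union> Eq) lam cn (\<theta> + 1) C_red}"
proof -
  define Red where "Red = {b. reducible_with {..<n} dd (E0 \<union> edges_of b) lam cn (\<theta> + 1) C_red}"
  define Bad where "Bad = (\<lambda>(s, t). {b. s \<noteq> t \<and> \<not> reduced s t (E0 \<union> edges_of b)})"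
  have "UNIV - Red \<subseteq> \<Union> (Bad ` ({..<n} \<times> {..<n}))"
  proof
    fix b assume "b \<in> UNIV - Red"
    then obtain s t where "s < n" "t < n" "s \<noteq> t" "\<not> reduced s t (E0 \<union> edges_of b)"
      unfolding Red_def reducible_with_def reduced_def budget_def logn_def by auto
    thus "b \<in> \<Union> (Bad ` ({..<n} \<times> {..<n}))" unfolding Bad_def by auto
  qed
  hence "measure_pmf.prob coins (UNIV - Red) \<le> measure_pmf.prob coins (\<Union> (Bad ` ({..<n} \<times> {..<n})))"
    by (rule measure_pmf.finite_measure_mono) simp
  also have "\<dots> \<le> (\<Sum>x\<in>{..<n} \<times> {..<n}. measure_pmf.prob coins (Bad x))"
    by (rule measure_pmf.finite_measure_subadditive_finite) auto
  also have "\<dots> \<le> (\<Sum>x\<in>{..<n} \<times> {..<n}. 1 / real n ^ 3)"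
    by (intro sum_mono) (auto simp: Bad_def intro!: prob_not_reduced_le)
  also have "\<dots> = 1 / real n"
    using n_pos by (simp add: power3_eq_cube)
  finally have "measure_pmf.prob coins (UNIV - Red) \<le> 1 / real n" .
  thus ?thesis
    using measure_pmf.prob_compl [of Red coins]
    unfolding random_edges_eq measure_map_pmf Red_def by (simp add: vimage_def)
qed

end

theorem lemma3:
  fixes d :: "nat \<Rightarrow> nat \<Rightarrow> nat \<Rightarrow> real"
    and E0 :: "nat \<Rightarrow> nat set set"
    and conn :: "nat \<Rightarrow> nat \<Rightarrow> nat \<Rightarrow> nat"
    and Q :: "nat \<Rightarrow> nat \<Rightarrow> nat \<Rightarrow> real"
    and \<gamma> A \<alpha> \<phi> lam \<theta> M :: real
  assumes coh: "\<And>n. coherent {..<n} (d n) \<gamma> A \<alpha> \<phi> lam"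
    and sub: "\<And>n. substrate {..<n} (d n) (E0 n) (conn n)"
    and theta: "\<theta> > 0"
    and Mpos: "M > 0"
    and Qprob: "\<And>n i j. i < j \<Longrightarrow> j < n \<Longrightarrow> 0 \<le> Q n i j \<and> Q n i j \<le> 1"
    and rich: "\<And>n. uniformly_rich n (d n) \<gamma> \<alpha> \<theta> M (Q n)"
  shows "\<exists>C>0. (\<lambda>n. measure_pmf.prob (random_edges n (Q n))
            {Eq. reducible_with {..<n} (d n) (E0 n \<union> Eq) lam (conn n) (\<theta> + 1) C})
          \<longlonglongrightarrow> 1"
proof -
  have \<alpha>: "\<alpha> > 0" and \<phi>: "\<phi> > 0"
    using coh [of 0] unfolding coherent_def H1_def H2_def by auto
  let ?C = "8 * M / \<phi>"
  let ?p = "\<lambda>n. measure_pmf.prob (random_edges n (Q n))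
              {Eq. reducible_with {..<n} (d n) (E0 n \<union> Eq) lam (conn n) (\<theta> + 1) ?C}"
  have "eventually (\<lambda>n. 1 \<le> ln (real n)) at_top"
    and "eventually (\<lambda>n. ln (real n) powr \<theta> \<le> \<alpha> * real n) at_top"
    and "eventually (\<lambda>n. A * \<gamma> / ((\<gamma> - 1) * \<alpha>) / M + \<phi> / (2 * M) \<le> ln (real n)) at_top"
    using \<alpha> by real_asymp+
  hence "eventually (\<lambda>n. 1 - 1 / real n \<le> ?p n) at_top"
  proof eventually_elim
    case (elim n)
    interpret large_rich_graph n "d n" "E0 n" "conn n" "Q n" \<gamma> A \<alpha> \<phi> lam \<theta> M
      using coh sub theta Mpos Qprob rich elim by unfold_locales auto
    show ?case using prob_reducible_ge unfolding C_red_def .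
  qed
  moreover have "eventually (\<lambda>n. ?p n \<le> 1) at_top" by simp
  moreover have "(\<lambda>n. 1 - 1 / real n) \<longlonglongrightarrow> 1" by real_asymp
  ultimately have "?p \<longlonglongrightarrow> 1"
    using tendsto_sandwich [of _ ?p _ "\<lambda>_. 1"] by auto
  moreover have "?C > 0" using Mpos \<phi> by simp
  ultimately show ?thesis by blast
qed

end
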